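(* Let $G$ be a finite group of nilpotency class at most $2$ and $w\in F_2$. Let $e=\exp(G)$, $e'=\exp([G,G])$ and $f=\exp(G/Z(G))$, and for $r\in\mathbb N$ let $\mathcal P_r$ be the set of prime divisors of $r$. Then there exist $m,n\in\mathbb N$ with $\mathcal P_m\subseteq\mathcal P_e$, $\mathcal P_n\subseteq\mathcal P_f$ and $n\le e'$ such that $w(G)=v(G)$ where $v=x^m[x,y^n]$.
   Context: $[a,b]=aba^{-1}b^{-1}$; $x,y$ are the free generators of $F_2$; for $w\in F_2$, $w(G)=\{w(a,b):a,b\in G\}$. Nilpotency class at most 2 means $[G,G]\subseteq Z(G)$. *)

theory Defs
  imports "HOL-Algebra.Algebra"
begin

definition comm :: "('a, 'b) monoid_scheme \<Rightarrow> 'a \<Rightarrow> 'a \<Rightarrow> 'a" where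
  "comm G a b = a \<otimes>\<^bsub>G\<^esub> b \<otimes>\<^bsub>G\<^esub> inv\<^bsub>G\<^esub> a \<otimes>\<^bsub>G\<^esub> inv\<^bsub>G\<^esub> b"

definition center :: "('a, 'b) monoid_scheme \<Rightarrow> 'a set" where
  "center G = {z \<in> carrier G. \<forall>g \<in> carrier G. z \<otimes>\<^bsub>G\<^esub> g = g \<otimes>\<^bsub>G\<^esub> z}"

definition nilpotent_class_le_2 :: "('a, 'b) monoid_scheme \<Rightarrow> bool" where
  "nilpotent_class_le_2 G \<longleftrightarrow> derived G (carrier G) \<subseteq> center G"

definition grp_exp :: "('a, 'b) monoid_scheme \<Rightarrow> nat" where
  "grp_exp G = (LEAST n. 0 < n \<and> (\<forall>g \<in> carrier G. g [^]\<^bsub>G\<^esub> n = \<one>\<^bsub>G\<^esub>))"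

text \<open>Elements of the free group F_2 on x, y, represented by words: lists of
  letters (gen, inverted), gen = False for x and True for y.  The word map
  depends only on the group element the word represents.\<close>
type_synonym word2 = "(bool \<times> bool) list"

fun letter_eval :: "('a, 'b) monoid_scheme \<Rightarrow> 'a \<Rightarrow> 'a \<Rightarrow> bool \<times> bool \<Rightarrow> 'a" where
  "letter_eval G a b (g, i) = (let c = (if g then b else a) in if i then inv\<^bsub>G\<^esub> c else c)"

fun word_eval :: "('a, 'b) monoid_scheme \<Rightarrow> word2 \<Rightarrow> 'a \<Rightarrow> 'a \<Rightarrow> 'a" where
  "word_eval G [] a b = \<one>\<^bsub>G\<^esub>"
| "word_eval G (l # ls) a b = letter_eval G a b l \<otimes>\<^bsub>G\<^esub> word_eval G ls a b"

definition word_image :: "('a, 'b) monoid_scheme \<Rightarrow> word2 \<Rightarrow> 'a set" where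
  "word_image G w = {word_eval G w a b | a b. a \<in> carrier G \<and> b \<in> carrier G}"

text \<open>The word x^m [x, y^n] = x^m x y^n x^-1 y^-n.\<close>
definition v_word :: "nat \<Rightarrow> nat \<Rightarrow> word2" where
  "v_word m n = replicate m (False, False) @ [(False, False)] @ replicate n (True, False)
                 @ [(False, True)] @ replicate n (True, True)"

definition prime_divs :: "nat \<Rightarrow> nat set" where
  "prime_divs r = {p. Factorial_Ring.prime p \<and> p dvd r}"

end

theory Submission
  imports Defs "HOL-Number_Theory.Cong"
begin

text \<open>In a group of class at most 2 the commutator is central and bimultiplicative, so every
  word evaluates to \<open>a\<^sup>\<alpha> b\<^sup>\<beta> [a,b]\<^sup>\<gamma>\<close>, where \<open>\<alpha>, \<beta>\<close> are the exponent sums of \<open>x, y\<close>.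
  Nielsen transformations of \<open>F\<^sub>2\<close> do not change \<open>w(G)\<close> and act on \<open>(\<alpha>, \<beta>)\<close> as the steps of
  the Euclidean algorithm, so one may assume \<open>\<beta> = 0\<close>; then \<open>w(G) = {a\<^sup>\<alpha> [a,b]\<^sup>\<gamma>}\<close>.
  Substituting \<open>a\<^sup>u\<close> for \<open>a\<close>, with \<open>u\<close> a unit modulo \<open>e\<close>, rescales \<open>(\<alpha>, \<gamma>)\<close> by \<open>u\<close> and removes
  from \<open>\<alpha>\<close> every prime not dividing \<open>e\<close>. Substituting \<open>b\<^sup>u\<close> for \<open>b\<close> rescales \<open>\<gamma>\<close> alone, and \<open>\<gamma>\<close>
  only matters modulo \<open>gcd e' f\<close>, because \<open>[a,b]\<^sup>f = [a,b\<^sup>f] = 1\<close>.\<close>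

definition sign_of :: "bool \<Rightarrow> int" where
  "sign_of i = (if i then -1 else 1)"

fun x_exp :: "word2 \<Rightarrow> int" where
  "x_exp [] = 0"
| "x_exp ((g, i) # ls) = (if g then 0 else sign_of i) + x_exp ls"

fun y_exp :: "word2 \<Rightarrow> int" where
  "y_exp [] = 0"
| "y_exp ((g, i) # ls) = (if g then sign_of i else 0) + y_exp ls"

fun comm_exp :: "word2 \<Rightarrow> int" where
  "comm_exp [] = 0"
| "comm_exp ((g, i) # ls) = (if g then comm_exp ls - sign_of i * x_exp ls else comm_exp ls)"

definition word_inv :: "word2 \<Rightarrow> word2" where
  "word_inv s = rev (map (\<lambda>(g, i). (g, \<not> i)) s)"

fun word_subst :: "word2 \<Rightarrow> word2 \<Rightarrow> word2 \<Rightarrow> word2" where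
  "word_subst u v [] = []"
| "word_subst u v ((g, i) # ls) =
     (let s = if g then v else u in if i then word_inv s else s) @ word_subst u v ls"

definition swap_xy :: "word2 \<Rightarrow> word2" where
  "swap_xy w = word_subst [(True, False)] [(False, False)] w"

text \<open>The automorphism \<open>x \<mapsto> x y\<close> (\<open>x \<mapsto> x y\<^sup>-\<^sup>1\<close> if \<open>i\<close>), \<open>y \<mapsto> y\<close>, applied to \<open>w\<close>.\<close>
definition transvection :: "bool \<Rightarrow> word2 \<Rightarrow> word2" where
  "transvection i w = word_subst [(False, False), (True, i)] [(True, False)] w"

lemma word_inv_simps [simp]:
  "word_inv [] = []" "word_inv ((g, i) # s) = word_inv s @ [(g, \<not> i)]"
  by (auto simp: word_inv_def)

lemma x_exp_append [simp]: "x_exp (s @ t) = x_exp s + x_exp t"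
  by (induction s rule: x_exp.induct) auto

lemma y_exp_append [simp]: "y_exp (s @ t) = y_exp s + y_exp t"
  by (induction s rule: y_exp.induct) auto

lemma x_exp_word_inv [simp]: "x_exp (word_inv s) = - x_exp s"
  by (induction s rule: x_exp.induct) (auto simp: sign_of_def)

lemma y_exp_word_inv [simp]: "y_exp (word_inv s) = - y_exp s"
  by (induction s rule: y_exp.induct) (auto simp: sign_of_def)

lemma x_exp_word_subst: "x_exp (word_subst u v w) = x_exp w * x_exp u + y_exp w * x_exp v"
  by (induction w rule: x_exp.induct) (auto simp: sign_of_def algebra_simps)

lemma y_exp_word_subst: "y_exp (word_subst u v w) = x_exp w * y_exp u + y_exp w * y_exp v"
  by (induction w rule: y_exp.induct) (auto simp: sign_of_def algebra_simps)

lemma exps_swap_xy [simp]: "x_exp (swap_xy w) = y_exp w" "y_exp (swap_xy w) = x_exp w"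
  by (simp_all add: swap_xy_def x_exp_word_subst y_exp_word_subst sign_of_def)

lemma exps_transvection [simp]:
  "x_exp (transvection i w) = x_exp w"
  "y_exp (transvection i w) = y_exp w + sign_of i * x_exp w"
  by (simp_all add: transvection_def x_exp_word_subst y_exp_word_subst sign_of_def)

context group
begin

lemma mult_inv_cancel_left [simp]: "x \<in> carrier G \<Longrightarrow> y \<in> carrier G \<Longrightarrow> x \<otimes> (inv x \<otimes> y) = y"
  and inv_mult_cancel_left [simp]: "x \<in> carrier G \<Longrightarrow> y \<in> carrier G \<Longrightarrow> inv x \<otimes> (x \<otimes> y) = y"
  by (simp_all flip: m_assoc)

lemma letter_eval_eq:
  "a \<in> carrier G \<Longrightarrow> b \<in> carrier G \<Longrightarrow>
    letter_eval G a b (g, i) = (if g then b else a) [^] sign_of i"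
  by (simp add: sign_of_def int_pow_neg)

lemma word_eval_closed [simp]:
  "a \<in> carrier G \<Longrightarrow> b \<in> carrier G \<Longrightarrow> word_eval G w a b \<in> carrier G"
proof (induction w)
  case (Cons l w)
  then show ?case by (cases l) (simp add: Let_def)
qed simp

lemma word_eval_append:
  "a \<in> carrier G \<Longrightarrow> b \<in> carrier G \<Longrightarrow>
    word_eval G (s @ t) a b = word_eval G s a b \<otimes> word_eval G t a b"
  by (induction s) (auto simp: m_assoc)

lemma word_eval_replicate:
  "a \<in> carrier G \<Longrightarrow> b \<in> carrier G \<Longrightarrow>
    word_eval G (replicate k l) a b = letter_eval G a b l [^] k"
proof (induction k)
  case (Suc k)
  have "letter_eval G a b l \<in> carrier G" using Suc.prems by (cases l) (simp add: Let_def)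
  with Suc show ?case by simp (metis nat_pow_Suc nat_pow_Suc2)
qed simp

lemma word_eval_word_inv:
  "a \<in> carrier G \<Longrightarrow> b \<in> carrier G \<Longrightarrow> word_eval G (word_inv s) a b = inv (word_eval G s a b)"
  by (induction s) (auto simp: word_eval_append Let_def inv_mult_group)

lemma word_eval_word_subst:
  "a \<in> carrier G \<Longrightarrow> b \<in> carrier G \<Longrightarrow>
    word_eval G (word_subst u v w) a b = word_eval G w (word_eval G u a b) (word_eval G v a b)"
  by (induction w rule: word_subst.induct) (auto simp: word_eval_append word_eval_word_inv Let_def)

lemma word_image_word_subst:
  assumes onto: "\<And>a b. a \<in> carrier G \<Longrightarrow> b \<in> carrier G \<Longrightarrow>
    \<exists>a' \<in> carrier G. \<exists>b' \<in> carrier G. word_eval G u a' b' = a \<and> word_eval G v a' b' = b"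
  shows "word_image G (word_subst u v w) = word_image G w"
proof
  show "word_image G (word_subst u v w) \<subseteq> word_image G w"
    unfolding word_image_def by (fastforce simp: word_eval_word_subst)
  show "word_image G w \<subseteq> word_image G (word_subst u v w)"
  proof
    fix z assume "z \<in> word_image G w"
    then obtain a b where ab: "a \<in> carrier G" "b \<in> carrier G" "z = word_eval G w a b"
      unfolding word_image_def by auto
    from onto[OF ab(1,2)] obtain a' b' where "a' \<in> carrier G" "b' \<in> carrier G"
      "word_eval G u a' b' = a" "word_eval G v a' b' = b" by blast
    with ab show "z \<in> word_image G (word_subst u v w)"
      unfolding word_image_def by (force simp: word_eval_word_subst)
  qed
qed

lemma word_image_swap_xy: "word_image G (swap_xy w) = word_image G w"
  unfolding swap_xy_def by (rule word_image_word_subst) auto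

lemma word_image_transvection: "word_image G (transvection i w) = word_image G w"
  unfolding transvection_def
proof (rule word_image_word_subst)
  fix a b assume a: "a \<in> carrier G" and b: "b \<in> carrier G"
  let ?c = "if i then b else inv b"
  have "a \<otimes> ?c \<otimes> letter_eval G a b (True, i) = a"
    using a b by (simp add: m_assoc)
  with a b show "\<exists>a' \<in> carrier G. \<exists>b' \<in> carrier G.
      word_eval G [(False, False), (True, i)] a' b' = a \<and> word_eval G [(True, False)] a' b' = b"
    by (intro bexI[of _ "a \<otimes> ?c"] bexI[of _ b]) (auto simp: m_assoc)
qed

end

lemma transvection_shortens:
  assumes "x_exp w \<noteq> 0" "\<bar>x_exp w\<bar> \<le> \<bar>y_exp w\<bar>"
  shows "\<exists>i. \<bar>y_exp (transvection i w)\<bar> < \<bar>y_exp w\<bar>"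
proof -
  have "\<bar>y_exp w + sign_of i * x_exp w\<bar> < \<bar>y_exp w\<bar>" if "i \<longleftrightarrow> (0 < x_exp w \<longleftrightarrow> 0 < y_exp w)" for i
    using assms that by (auto simp: sign_of_def)
  then show ?thesis by auto
qed

lemma (in group) exists_word_image_eq_y_exp_zero:
  "\<exists>w'. word_image G w' = word_image G w \<and> y_exp w' = 0"
proof (induction "nat (\<bar>x_exp w\<bar> + \<bar>y_exp w\<bar>)" arbitrary: w rule: less_induct)
  case less
  have reduce: "\<exists>w'. word_image G w' = word_image G u \<and> y_exp w' = 0"
    if u: "x_exp u \<noteq> 0" "\<bar>x_exp u\<bar> \<le> \<bar>y_exp u\<bar>" "\<bar>x_exp u\<bar> + \<bar>y_exp u\<bar> \<le> \<bar>x_exp w\<bar> + \<bar>y_exp w\<bar>" for u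
  proof -
    obtain i where "\<bar>y_exp (transvection i u)\<bar> < \<bar>y_exp u\<bar>"
      using transvection_shortens u(1,2) by blast
    with u(3) have "nat (\<bar>x_exp (transvection i u)\<bar> + \<bar>y_exp (transvection i u)\<bar>)
        < nat (\<bar>x_exp w\<bar> + \<bar>y_exp w\<bar>)" by simp
    from less[OF this] show ?thesis by (simp add: word_image_transvection)
  qed
  consider "y_exp w = 0" | "x_exp w = 0" | "x_exp w \<noteq> 0" "\<bar>x_exp w\<bar> \<le> \<bar>y_exp w\<bar>"
    | "y_exp w \<noteq> 0" "\<bar>y_exp w\<bar> < \<bar>x_exp w\<bar>" by linarith
  then show ?case
  proof cases
    case 2
    then show ?thesis by (metis exps_swap_xy(2) word_image_swap_xy)
  next
    case 4
    then show ?thesis using reduce[of "swap_xy w"] by (simp add: word_image_swap_xy)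
  qed (use reduce in auto)
qed

lemma prime_divs_mono: "a dvd b \<Longrightarrow> prime_divs a \<subseteq> prime_divs b"
  by (auto simp: prime_divs_def intro: dvd_trans)

lemma nat_split_coprime_part:
  fixes x M :: nat
  assumes "0 < x"
  shows "\<exists>x1 x2. x = x1 * x2 \<and> prime_divs x1 \<subseteq> prime_divs M \<and> coprime x2 M"
  using assms
proof (induction x rule: less_induct)
  case (less x)
  show ?case
  proof (cases "coprime x M")
    case True
    then have "x = 1 * x \<and> prime_divs 1 \<subseteq> prime_divs M \<and> coprime x M"
      by (auto simp: prime_divs_def)
    then show ?thesis by blast
  next
    case False
    then obtain p where p: "Factorial_Ring.prime p" "p dvd x" "p dvd M"
      using prime_factor_nat[of "gcd x M"] by (auto simp: coprime_iff_gcd_eq_1)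
    then obtain x' where x': "x = p * x'" by blast
    with less.prems prime_gt_1_nat[OF p(1)] have "x' < x" "0 < x'" by auto
    with less.IH obtain y1 y2 where y: "x' = y1 * y2" "prime_divs y1 \<subseteq> prime_divs M" "coprime y2 M"
      by blast
    have "prime_divs (p * y1) \<subseteq> prime_divs M"
      using p y(2) by (auto simp: prime_divs_def prime_dvd_mult_iff dest: primes_dvd_imp_eq)
    with y x' show ?thesis by (intro exI[of _ "p * y1"] exI[of _ y2]) (auto simp: mult.assoc)
  qed
qed

lemma exists_pos_residue:
  assumes "0 < N"
  shows "\<exists>k::nat. 0 < k \<and> k \<le> N \<and> [int k = i] (mod int N)"
proof -
  define k where "k = nat ((i - 1) mod int N) + 1"
  have "int k = (i - 1) mod int N + 1" using assms by (simp add: k_def)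
  moreover have "[(i - 1) mod int N + 1 = i - 1 + 1] (mod int N)"
    by (intro cong_add) (simp_all add: cong_def)
  ultimately have "[int k = i] (mod int N)" by simp
  moreover have "0 \<le> (i - 1) mod int N" "(i - 1) mod int N < int N" using assms by simp_all
  then have "k \<le> N" unfolding k_def by linarith
  ultimately show ?thesis by (auto simp: k_def)
qed

lemma grp_exp_pos: "group H \<Longrightarrow> finite (carrier H) \<Longrightarrow> 0 < grp_exp H"
  and pow_grp_exp: "group H \<Longrightarrow> finite (carrier H) \<Longrightarrow> g \<in> carrier H \<Longrightarrow>
    g [^]\<^bsub>H\<^esub> grp_exp H = \<one>\<^bsub>H\<^esub>"
proof -
  assume H: "group H" "finite (carrier H)"
  interpret H: group H by (fact H(1))
  from H(2) have "0 < order H \<and> (\<forall>g \<in> carrier H. g [^]\<^bsub>H\<^esub> order H = \<one>\<^bsub>H\<^esub>)"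
    by (simp add: H.order_gt_0_iff_finite H.pow_order_eq_1)
  then have "0 < grp_exp H \<and> (\<forall>g \<in> carrier H. g [^]\<^bsub>H\<^esub> grp_exp H = \<one>\<^bsub>H\<^esub>)"
    unfolding grp_exp_def by (rule LeastI)
  then show "0 < grp_exp H" "g \<in> carrier H \<Longrightarrow> g [^]\<^bsub>H\<^esub> grp_exp H = \<one>\<^bsub>H\<^esub>" by auto
qed

context group
begin

lemma comm_swap: "a \<in> carrier G \<Longrightarrow> b \<in> carrier G \<Longrightarrow> comm G b a = inv (comm G a b)"
  by (simp add: comm_def m_assoc inv_mult_group)

lemma comm_closed [simp]: "a \<in> carrier G \<Longrightarrow> b \<in> carrier G \<Longrightarrow> comm G a b \<in> carrier G"
  by (simp add: comm_def)

lemma comm_center_eq_one: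
  assumes "a \<in> carrier G" "z \<in> center G"
  shows "comm G a z = \<one>"
proof -
  have z: "z \<in> carrier G" "z \<otimes> a = a \<otimes> z" using assms unfolding center_def by blast+
  then show ?thesis using assms(1) by (simp add: comm_def m_assoc flip: z(2))
qed

lemma int_pow_cong:
  assumes "x \<in> carrier G" "x [^] (N::nat) = \<one>" "[i = j] (mod int N)"
  shows "x [^] (i::int) = x [^] j"
proof -
  have "int (ord x) dvd int N" using assms(1,2) pow_eq_id by simp
  with assms(3) have "int (ord x) dvd j - i"
    by (meson cong_dvd_modulus cong_iff_dvd_diff cong_sym)
  with assms(1) show ?thesis by (simp add: int_pow_eq)
qed

lemma pow_gcd_eq_one:
  assumes "x \<in> carrier G" "x [^] (p::nat) = \<one>" "x [^] (q::nat) = \<one>"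
  shows "x [^] gcd p q = \<one>"
  using assms by (simp add: pow_eq_id)

lemma group_derived: "group (G\<lparr>carrier := derived G (carrier G)\<rparr>)"
  by (rule subgroup.subgroup_is_group[OF derived_is_subgroup is_group]) simp

lemma finite_derived:
  "finite (carrier G) \<Longrightarrow> finite (carrier (G\<lparr>carrier := derived G (carrier G)\<rparr>))"
  using finite_subset[OF subgroup.subset[OF derived_is_subgroup[OF order_refl]]] by simp

lemma center_subgroup: "subgroup (center G) G"
proof (rule subgroupI)
  fix x y assume "x \<in> center G" "y \<in> center G"
  then have xc: "x \<in> carrier G" "\<And>g. g \<in> carrier G \<Longrightarrow> x \<otimes> g = g \<otimes> x"
    and yc: "y \<in> carrier G" "\<And>g. g \<in> carrier G \<Longrightarrow> y \<otimes> g = g \<otimes> y"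
    unfolding center_def by blast+
  have "inv x \<otimes> g = g \<otimes> inv x" if g: "g \<in> carrier G" for g
  proof -
    have "inv x \<otimes> g = inv (inv g \<otimes> x)" using xc(1) g by (simp add: inv_mult_group)
    also have "\<dots> = inv (x \<otimes> inv g)" using xc(2)[of "inv g"] g by simp
    also have "\<dots> = g \<otimes> inv x" using xc(1) g by (simp add: inv_mult_group)
    finally show ?thesis .
  qed
  with xc show "inv x \<in> center G" unfolding center_def by blast
  have "x \<otimes> y \<otimes> g = g \<otimes> (x \<otimes> y)" if g: "g \<in> carrier G" for g
  proof -
    have "x \<otimes> y \<otimes> g = x \<otimes> (g \<otimes> y)" using xc(1) yc(1) yc(2)[OF g] g by (simp add: m_assoc)
    also have "\<dots> = g \<otimes> x \<otimes> y" using xc(1) xc(2)[OF g] yc(1) g by (simp flip: m_assoc)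
    finally show ?thesis using xc(1) yc(1) g by (simp add: m_assoc)
  qed
  with xc yc show "x \<otimes> y \<in> center G" unfolding center_def by blast
qed (auto simp: center_def)

lemma center_normal: "center G \<lhd> G"
proof -
  have "{h \<otimes> x} = {x \<otimes> h}" if "x \<in> carrier G" "h \<in> center G" for x h
    using that unfolding center_def by blast
  then have "center G #> x = x <# center G" if "x \<in> carrier G" for x
    unfolding r_coset_def l_coset_def using that by (intro SUP_cong) auto
  then show ?thesis by (intro normalI center_subgroup) blast
qed

lemma pow_exp_center_quotient_mem_center:
  assumes "finite (carrier G)" "b \<in> carrier G"
  shows "b [^] grp_exp (G Mod center G) \<in> center G"
proof -
  interpret Z: normal "center G" G by (rule center_normal)
  let ?f = "grp_exp (G Mod center G)"
  have fin: "finite (carrier (G Mod center G))"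
    using assms(1) by (simp add: carrier_FactGroup)
  have "center G #> b [^] ?f = (center G #> b) [^]\<^bsub>G Mod center G\<^esub> ?f"
    using hom_nat_pow[OF Z.r_coset_hom_Mod assms(2) is_group Z.factorgroup_is_group] by simp
  also have "\<dots> = center G"
    using pow_grp_exp[OF Z.factorgroup_is_group fin] assms(2) by (simp add: carrier_FactGroup)
  finally have "center G #> b [^] ?f = center G" .
  then show ?thesis
    using rcos_self[of "b [^] ?f" "center G"] assms(2) Z.subgroup_axioms by simp
qed

end

definition power_comm_image :: "('a, 'b) monoid_scheme \<Rightarrow> int \<Rightarrow> int \<Rightarrow> 'a set" where
  "power_comm_image G i j =
    {a [^]\<^bsub>G\<^esub> i \<otimes>\<^bsub>G\<^esub> comm G a b [^]\<^bsub>G\<^esub> j | a b. a \<in> carrier G \<and> b \<in> carrier G}"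

locale class2_group = group G for G (structure) +
  assumes derived_subset_center: "derived G (carrier G) \<subseteq> center G"
begin

lemma comm_central:
  assumes "a \<in> carrier G" "b \<in> carrier G" "g \<in> carrier G"
  shows "comm G a b \<otimes> g = g \<otimes> comm G a b"
proof -
  have "comm G a b \<in> derived G (carrier G)"
    unfolding derived_def comm_def using assms by (intro generate.incl) blast
  with derived_subset_center assms(3) show ?thesis by (auto simp: center_def)
qed

lemma conj_comm:
  assumes "a \<in> carrier G" "b \<in> carrier G" "g \<in> carrier G"
  shows "g \<otimes> comm G a b \<otimes> inv g = comm G a b"
proof -
  have "g \<otimes> comm G a b \<otimes> inv g = comm G a b \<otimes> g \<otimes> inv g"
    by (simp only: comm_central[OF assms])
  with assms show ?thesis by (simp add: m_assoc)
qed

lemma comm_hom_right: "a \<in> carrier G \<Longrightarrow> comm G a \<in> hom G G"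
proof (rule homI)
  fix x y assume a: "a \<in> carrier G" and x: "x \<in> carrier G" and y: "y \<in> carrier G"
  then show "comm G a x \<in> carrier G" by simp
  have "comm G a (x \<otimes> y) = comm G a x \<otimes> (x \<otimes> comm G a y \<otimes> inv x)"
    using a x y by (simp add: comm_def m_assoc inv_mult_group)
  then show "comm G a (x \<otimes> y) = comm G a x \<otimes> comm G a y"
    using a x y by (simp add: conj_comm)
qed

lemma comm_hom_left: "b \<in> carrier G \<Longrightarrow> (\<lambda>x. comm G x b) \<in> hom G G"
proof (rule homI)
  fix x y assume b: "b \<in> carrier G" and x: "x \<in> carrier G" and y: "y \<in> carrier G"
  then show "comm G x b \<in> carrier G" by simp
  have "comm G (x \<otimes> y) b = x \<otimes> comm G y b \<otimes> inv x \<otimes> comm G x b"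
    using b x y by (simp add: comm_def m_assoc inv_mult_group)
  also have "\<dots> = comm G y b \<otimes> comm G x b"
    using b x y by (simp add: conj_comm)
  also have "\<dots> = comm G x b \<otimes> comm G y b"
    using comm_central[OF x b comm_closed[OF y b]] by simp
  finally show "comm G (x \<otimes> y) b = comm G x b \<otimes> comm G y b" .
qed

lemma comm_int_pow_right:
  "a \<in> carrier G \<Longrightarrow> b \<in> carrier G \<Longrightarrow> comm G a (b [^] (k::int)) = comm G a b [^] k"
  using hom_int_pow[OF comm_hom_right] is_group by blast

lemma comm_int_pow_left:
  "a \<in> carrier G \<Longrightarrow> b \<in> carrier G \<Longrightarrow> comm G (a [^] (k::int)) b = comm G a b [^] k"
  using hom_int_pow[OF comm_hom_left, of b a] is_group by blast

lemma comm_int_pow_central: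
  "a \<in> carrier G \<Longrightarrow> b \<in> carrier G \<Longrightarrow> g \<in> carrier G \<Longrightarrow>
    comm G a b [^] (k::int) \<otimes> g = g \<otimes> comm G a b [^] k"
  using comm_central[of a "b [^] k" g] by (simp add: comm_int_pow_right)

lemma int_pow_swap:
  assumes a: "a \<in> carrier G" and b: "b \<in> carrier G"
  shows "b [^] (s::int) \<otimes> a [^] (\<alpha>::int) = a [^] \<alpha> \<otimes> b [^] s \<otimes> comm G a b [^] (- (s * \<alpha>))"
proof -
  let ?k = "- (s * \<alpha>)"
  have "comm G (a [^] \<alpha>) (b [^] s) = comm G a b [^] (s * \<alpha>)"
    using a b by (simp add: comm_int_pow_left comm_int_pow_right int_pow_pow mult.commute)
  then have "comm G (b [^] s) (a [^] \<alpha>) = comm G a b [^] ?k"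
    using comm_swap[OF int_pow_closed[OF a] int_pow_closed[OF b]] a b by (simp add: int_pow_neg)
  moreover have "b [^] s \<otimes> a [^] \<alpha> = comm G (b [^] s) (a [^] \<alpha>) \<otimes> (a [^] \<alpha> \<otimes> b [^] s)"
    using a b by (simp add: comm_def m_assoc)
  ultimately show ?thesis
    using comm_int_pow_central[OF a b, of "a [^] \<alpha> \<otimes> b [^] s" ?k] a b by simp
qed

lemma b_pow_mult_normal_form:
  assumes a: "a \<in> carrier G" and b: "b \<in> carrier G"
  shows "b [^] (s::int) \<otimes> (a [^] (\<alpha>::int) \<otimes> b [^] (\<beta>::int) \<otimes> comm G a b [^] (\<gamma>::int))
    = a [^] \<alpha> \<otimes> b [^] (s + \<beta>) \<otimes> comm G a b [^] (\<gamma> - s * \<alpha>)"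
proof -
  let ?c = "comm G a b" and ?k = "- (s * \<alpha>)"
  have "b [^] s \<otimes> (a [^] \<alpha> \<otimes> b [^] \<beta> \<otimes> ?c [^] \<gamma>)
      = (b [^] s \<otimes> a [^] \<alpha>) \<otimes> b [^] \<beta> \<otimes> ?c [^] \<gamma>"
    using a b by (simp add: m_assoc)
  also have "\<dots> = a [^] \<alpha> \<otimes> b [^] s \<otimes> (?c [^] ?k \<otimes> b [^] \<beta>) \<otimes> ?c [^] \<gamma>"
    using a b by (simp only: int_pow_swap[OF a b]) (simp add: m_assoc)
  also have "\<dots> = a [^] \<alpha> \<otimes> (b [^] s \<otimes> b [^] \<beta>) \<otimes> (?c [^] ?k \<otimes> ?c [^] \<gamma>)"
    using a b by (simp only: comm_int_pow_central[OF a b int_pow_closed[OF b]]) (simp add: m_assoc)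
  also have "\<dots> = a [^] \<alpha> \<otimes> b [^] (s + \<beta>) \<otimes> ?c [^] (?k + \<gamma>)"
    using a b by (simp add: int_pow_mult[symmetric])
  also have "?k + \<gamma> = \<gamma> - s * \<alpha>" by simp
  finally show ?thesis .
qed

lemma word_eval_normal_form:
  assumes a: "a \<in> carrier G" and b: "b \<in> carrier G"
  shows "word_eval G w a b = a [^] x_exp w \<otimes> b [^] y_exp w \<otimes> comm G a b [^] comm_exp w"
proof (induction w)
  case Nil
  then show ?case using a b by simp
next
  case (Cons l w)
  obtain g i where l: "l = (g, i)" by (cases l)
  then have eval: "word_eval G (l # w) a b = (if g then b else a) [^] sign_of i \<otimes> word_eval G w a b"
    using a b by (simp add: letter_eval_eq del: letter_eval.simps)
  show ?case
  proof (cases g)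
    case True
    with eval Cons a b l show ?thesis by (simp add: b_pow_mult_normal_form)
  next
    case False
    with eval Cons a b l show ?thesis by (simp add: m_assoc int_pow_mult)
  qed
qed

lemma word_image_eq_power_comm_image:
  assumes "y_exp w = 0"
  shows "word_image G w = power_comm_image G (x_exp w) (comm_exp w)"
  unfolding word_image_def power_comm_image_def
  using assms by (intro Collect_cong) (metis word_eval_normal_form int_pow_0 r_one int_pow_closed)

lemma word_image_v_word: "word_image G (v_word m n) = power_comm_image G (int m) (int n)"
proof -
  have "word_eval G (v_word m n) a b = a [^] int m \<otimes> comm G a b [^] int n"
    if a: "a \<in> carrier G" and b: "b \<in> carrier G" for a b
  proof -
    have "word_eval G (v_word m n) a b = a [^] m \<otimes> comm G a (b [^] int n)"
      unfolding v_word_def using a b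
      by (simp add: word_eval_append word_eval_replicate comm_def nat_pow_inv m_assoc int_pow_int)
    then show ?thesis using comm_int_pow_right[OF a b, of "int n"] by (simp add: int_pow_int)
  qed
  then show ?thesis unfolding word_image_def power_comm_image_def by (intro Collect_cong) metis
qed

lemma comm_pow_grp_exp_center_quotient:
  assumes "finite (carrier G)" "a \<in> carrier G" "b \<in> carrier G"
  shows "comm G a b [^] grp_exp (G Mod center G) = \<one>"
proof -
  let ?f = "grp_exp (G Mod center G)"
  have "comm G a b [^] ?f = comm G a (b [^] ?f)"
    using comm_int_pow_right[OF assms(2,3), of "int ?f"] by (simp add: int_pow_int)
  also have "\<dots> = \<one>"
    using comm_center_eq_one pow_exp_center_quotient_mem_center assms by blast
  finally show ?thesis .
qed

lemma comm_pow_grp_exp_derived: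
  assumes "finite (carrier G)" "a \<in> carrier G" "b \<in> carrier G"
  shows "comm G a b [^] grp_exp (G\<lparr>carrier := derived G (carrier G)\<rparr>) = \<one>"
proof -
  let ?D = "G\<lparr>carrier := derived G (carrier G)\<rparr>"
  have "comm G a b \<in> carrier ?D"
    unfolding derived_def comm_def using assms(2,3) by (simp, intro generate.incl) blast
  from pow_grp_exp[OF group_derived finite_derived[OF assms(1)] this] show ?thesis
    by (simp add: nat_pow_consistent[symmetric])
qed

lemma comm_pow_gcd_exps:
  assumes "finite (carrier G)" "a \<in> carrier G" "b \<in> carrier G"
  shows "comm G a b [^] gcd (grp_exp (G\<lparr>carrier := derived G (carrier G)\<rparr>)) (grp_exp (G Mod center G))
    = \<one>"
  using assms
  by (intro pow_gcd_eq_one comm_pow_grp_exp_derived comm_pow_grp_exp_center_quotient) simp_all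

lemma power_comm_image_cong:
  assumes "\<And>a b. a \<in> carrier G \<Longrightarrow> b \<in> carrier G \<Longrightarrow>
    a [^] i \<otimes> comm G a b [^] j = a [^] i' \<otimes> comm G a b [^] j'"
  shows "power_comm_image G i j = power_comm_image G i' j'"
  unfolding power_comm_image_def using assms by (intro Collect_cong) metis

lemma power_comm_image_pow_left_subset:
  "power_comm_image G (u * i) (u * j) \<subseteq> power_comm_image G i j"
proof
  fix z assume "z \<in> power_comm_image G (u * i) (u * j)"
  then obtain a b where ab: "a \<in> carrier G" "b \<in> carrier G"
    and "z = a [^] (u * i) \<otimes> comm G a b [^] (u * j)"
    unfolding power_comm_image_def by blast
  then have "z = (a [^] u) [^] i \<otimes> comm G (a [^] u) b [^] j"
    by (simp add: int_pow_pow comm_int_pow_left)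
  with ab show "z \<in> power_comm_image G i j"
    unfolding power_comm_image_def by (blast intro: int_pow_closed)
qed

lemma power_comm_image_pow_right_subset:
  "power_comm_image G i (u * j) \<subseteq> power_comm_image G i j"
proof
  fix z assume "z \<in> power_comm_image G i (u * j)"
  then obtain a b where ab: "a \<in> carrier G" "b \<in> carrier G"
    and "z = a [^] i \<otimes> comm G a b [^] (u * j)"
    unfolding power_comm_image_def by blast
  then have "z = a [^] i \<otimes> comm G a (b [^] u) [^] j"
    by (simp add: int_pow_pow comm_int_pow_right)
  with ab show "z \<in> power_comm_image G i j"
    unfolding power_comm_image_def by (blast intro: int_pow_closed)
qed

lemma power_comm_image_cong_mod:
  assumes exp: "\<And>a. a \<in> carrier G \<Longrightarrow> a [^] N = \<one>"
    and cong: "[i = i'] (mod int N)" "[j = j'] (mod int N)"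
  shows "power_comm_image G i j = power_comm_image G i' j'"
proof (rule power_comm_image_cong)
  fix a b assume a: "a \<in> carrier G" and b: "b \<in> carrier G"
  then have "comm G a b \<in> carrier G" by simp
  with a show "a [^] i \<otimes> comm G a b [^] j = a [^] i' \<otimes> comm G a b [^] j'"
    using int_pow_cong[OF _ exp cong(1)] int_pow_cong[OF _ exp cong(2)] by simp
qed

lemma power_comm_image_cong_mod_right:
  assumes exp: "\<And>a b. a \<in> carrier G \<Longrightarrow> b \<in> carrier G \<Longrightarrow> comm G a b [^] N = \<one>"
    and cong: "[j = j'] (mod int N)"
  shows "power_comm_image G i j = power_comm_image G i j'"
proof (rule power_comm_image_cong)
  fix a b assume "a \<in> carrier G" "b \<in> carrier G"
  then show "a [^] i \<otimes> comm G a b [^] j = a [^] i \<otimes> comm G a b [^] j'"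
    using int_pow_cong[OF comm_closed exp cong] by simp
qed

lemma power_comm_image_unit_left:
  assumes exp: "\<And>a. a \<in> carrier G \<Longrightarrow> a [^] N = \<one>" and unit: "[u * s = 1] (mod int N)"
  shows "power_comm_image G (u * i) (u * j) = power_comm_image G i j"
proof
  show "power_comm_image G (u * i) (u * j) \<subseteq> power_comm_image G i j"
    by (rule power_comm_image_pow_left_subset)
  have "[s * (u * k) = k] (mod int N)" for k
    using cong_scalar_right[OF unit, of k] by (simp add: ac_simps)
  then have "power_comm_image G i j = power_comm_image G (s * (u * i)) (s * (u * j))"
    using exp by (intro power_comm_image_cong_mod) (auto intro: cong_sym)
  also have "\<dots> \<subseteq> power_comm_image G (u * i) (u * j)"
    by (rule power_comm_image_pow_left_subset)
  finally show "power_comm_image G i j \<subseteq> power_comm_image G (u * i) (u * j)" .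
qed

lemma power_comm_image_unit_right:
  assumes exp: "\<And>a b. a \<in> carrier G \<Longrightarrow> b \<in> carrier G \<Longrightarrow> comm G a b [^] N = \<one>"
    and unit: "[u * t = 1] (mod int N)"
  shows "power_comm_image G i (u * j) = power_comm_image G i j"
proof
  show "power_comm_image G i (u * j) \<subseteq> power_comm_image G i j"
    by (rule power_comm_image_pow_right_subset)
  have "[t * (u * j) = j] (mod int N)"
    using cong_scalar_right[OF unit, of j] by (simp add: ac_simps)
  then have "power_comm_image G i j = power_comm_image G i (t * (u * j))"
    using exp by (intro power_comm_image_cong_mod_right) (auto intro: cong_sym)
  also have "\<dots> \<subseteq> power_comm_image G i (u * j)"
    by (rule power_comm_image_pow_right_subset)
  finally show "power_comm_image G i j \<subseteq> power_comm_image G i (u * j)" .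
qed

lemma power_comm_image_reduce_left:
  assumes "0 < N" and exp: "\<And>a. a \<in> carrier G \<Longrightarrow> a [^] N = \<one>"
  shows "\<exists>m::nat. \<exists>j'. prime_divs m \<subseteq> prime_divs N \<and>
    power_comm_image G i j = power_comm_image G (int m) j'"
proof -
  obtain k where k: "0 < k" "[int k = i] (mod int N)"
    using exists_pos_residue[OF assms(1)] by blast
  obtain m d where md: "k = m * d" "prime_divs m \<subseteq> prime_divs N" "coprime d N"
    using nat_split_coprime_part[OF k(1)] by blast
  obtain s where s: "[int d * s = 1] (mod int N)"
    using cong_solve_coprime_int[of "int d" "int N"] md(3) by auto
  have "[i = int d * int m] (mod int N)"
    using k(2) md(1) by (simp add: cong_sym_eq mult.commute)
  moreover have "[j = int d * (s * j)] (mod int N)"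
    using cong_scalar_right[OF s, of j] by (simp add: cong_sym_eq ac_simps)
  ultimately have "power_comm_image G i j = power_comm_image G (int d * int m) (int d * (s * j))"
    by (intro power_comm_image_cong_mod[OF exp])
  also have "\<dots> = power_comm_image G (int m) (s * j)"
    using exp s by (rule power_comm_image_unit_left)
  finally show ?thesis using md(2) by blast
qed

lemma power_comm_image_reduce_right:
  assumes "0 < N"
    and exp: "\<And>a b. a \<in> carrier G \<Longrightarrow> b \<in> carrier G \<Longrightarrow> comm G a b [^] N = \<one>"
  shows "\<exists>n::nat. prime_divs n \<subseteq> prime_divs N \<and> n \<le> N \<and>
    power_comm_image G i j = power_comm_image G i (int n)"
proof -
  obtain k where k: "0 < k" "k \<le> N" "[int k = j] (mod int N)"
    using exists_pos_residue[OF assms(1)] by blast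
  obtain n c where nc: "k = n * c" "prime_divs n \<subseteq> prime_divs N" "coprime c N"
    using nat_split_coprime_part[OF k(1)] by blast
  obtain t where t: "[int c * t = 1] (mod int N)"
    using cong_solve_coprime_int[of "int c" "int N"] nc(3) by auto
  have "[j = int c * int n] (mod int N)"
    using k(3) nc(1) by (simp add: cong_sym_eq mult.commute)
  then have "power_comm_image G i j = power_comm_image G i (int c * int n)"
    using power_comm_image_cong_mod_right[OF exp] by blast
  also have "\<dots> = power_comm_image G i (int n)"
    using exp t by (rule power_comm_image_unit_right)
  finally have "power_comm_image G i j = power_comm_image G i (int n)" .
  moreover have "n \<le> N" using k(1,2) nc(1) by (metis dvd_imp_le dvd_triv_left le_trans)
  ultimately show ?thesis using nc(2) by blast
qed

end

theorem lemma3p6: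
  fixes G :: "('a, 'b) monoid_scheme" and w :: word2
  assumes "group G" and "finite (carrier G)" and "nilpotent_class_le_2 G"
  shows "\<exists>m n :: nat.
           prime_divs m \<subseteq> prime_divs (grp_exp G) \<and>
           prime_divs n \<subseteq> prime_divs (grp_exp (G Mod (center G))) \<and>
           n \<le> grp_exp (G\<lparr>carrier := derived G (carrier G)\<rparr>) \<and>
           word_image G w = word_image G (v_word m n)"
proof -
  interpret class2_group G
    using assms(1,3) by (simp add: class2_group_def class2_group_axioms_def nilpotent_class_le_2_def)
  let ?e' = "grp_exp (G\<lparr>carrier := derived G (carrier G)\<rparr>)" and ?f = "grp_exp (G Mod center G)"
  obtain u where u: "word_image G u = word_image G w" "y_exp u = 0"
    using exists_word_image_eq_y_exp_zero by blast
  obtain m j where m: "prime_divs m \<subseteq> prime_divs (grp_exp G)"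
    and mj: "power_comm_image G (x_exp u) (comm_exp u) = power_comm_image G (int m) j"
    using power_comm_image_reduce_left[OF grp_exp_pos[OF assms(1,2)] pow_grp_exp[OF assms(1,2)]]
    by blast
  have e': "0 < ?e'" using grp_exp_pos[OF group_derived finite_derived[OF assms(2)]] .
  then have g: "0 < gcd ?e' ?f" by simp
  obtain n where n: "prime_divs n \<subseteq> prime_divs (gcd ?e' ?f)" "n \<le> gcd ?e' ?f"
    and jn: "power_comm_image G (int m) j = power_comm_image G (int m) (int n)"
    using power_comm_image_reduce_right[OF g comm_pow_gcd_exps[OF assms(2)]] by blast
  have "word_image G w = power_comm_image G (x_exp u) (comm_exp u)"
    using word_image_eq_power_comm_image[OF u(2)] u(1) by simp
  also have "\<dots> = word_image G (v_word m n)"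
    using mj jn word_image_v_word by simp
  finally have "word_image G w = word_image G (v_word m n)" .
  moreover have "prime_divs n \<subseteq> prime_divs ?f"
    using n(1) prime_divs_mono[OF gcd_dvd2, of ?e' ?f] by (rule order_trans)
  moreover have "n \<le> ?e'"
    using n(2) gcd_le1_nat[of ?e' ?f] e' by linarith
  ultimately show ?thesis using m by blast
qed

end
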